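(* Let $\hat Q_i:\mathcal X\times\mathcal A\to[0,1]$ ($i\in[m]$) be arbitrary and let $\hat\pi=\prod_i\hat\pi_i$ be a product policy that, for every context $x$, is an exact regularized Nash equilibrium of the empirical game $\{\hat Q_i(x,\cdot)\}_i$ (i.e. for all $i$, $\hat\pi_i(\cdot|x)$ maximizes $\pi_i'\mapsto\mathbb E_{a_i\sim\pi_i',\boldsymbol a_{-i}\sim\hat\pi_{-i}(\cdot|x)}[\hat Q_i(x,\boldsymbol a)]-\eta^{-1}\mathrm{KL}(\pi_i'\|\pi_i^{\mathrm{ref}}(\cdot|x))$ over $\Delta(\mathcal A_i)$). Let $\mathcal Z_i=\hat Q_i-r_i^\star$. Then for every $i\in[m]$ and every $x$, $$V_i^{\dagger,\hat\pi_{-i}}(x)-V_i^{\hat\pi}(x)\le\frac\eta2\max_{a_i\in\mathcal A_i}\mathbb E_{\boldsymbol a_{-i}\sim\hat\pi_{-i}(\cdot|x)}\big[\mathcal Z_i(x,a_i,\boldsymbol a_{-i})^2\big].$$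
   Context: $m$-player game: contexts $x\in\mathcal X$, finite action sets $\mathcal A_i$, $\mathcal A=\prod_i\mathcal A_i$, rewards $r_i^\star:\mathcal X\times\mathcal A\to[0,1]$, reference policies $\pi_i^{\mathrm{ref}}$, $\eta>0$. $V_i^\pi(x)=\mathbb E_{\boldsymbol a\sim\pi(\cdot|x)}[r_i^\star(x,\boldsymbol a)]-\eta^{-1}\mathrm{KL}(\pi_i(\cdot|x)\|\pi_i^{\mathrm{ref}}(\cdot|x))$ and $V_i^{\dagger,\nu_{-i}}(x)=\max_{\pi_i'}V_i^{(\pi_i',\nu_{-i})}(x)$, where $(\pi_i',\nu_{-i})$ is the joint policy $\pi_i'(a_i|x)\nu_{-i}(\boldsymbol a_{-i}|x)$; $\hat\pi_{-i}=\prod_{j\ne i}\hat\pi_j$. *)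

theory Defs
  imports "HOL-Analysis.Analysis"
begin

text \<open>Players are 0,...,m-1; player i has finite action set A i (actions of a common type 'a).
  A joint action is a function nat => 'a, ranging over PiE {..<m} A.
  A policy for player i is pol i :: 'x => 'a => real, a probability vector on A i for each context.\<close>

definition is_dist :: "'a set \<Rightarrow> ('a \<Rightarrow> real) \<Rightarrow> bool" where
  "is_dist S p \<longleftrightarrow> (\<forall>a\<in>S. 0 \<le> p a) \<and> sum p S = 1"

definition KL :: "'a set \<Rightarrow> ('a \<Rightarrow> real) \<Rightarrow> ('a \<Rightarrow> real) \<Rightarrow> ereal" where
  "KL S p q = (if (\<exists>a\<in>S. 0 < p a \<and> q a = 0) then \<infinity>
     else ereal (\<Sum>a\<in>S. if p a = 0 then 0 else p a * ln (p a / q a)))"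

definition joint_prob :: "nat \<Rightarrow> (nat \<Rightarrow> 'x \<Rightarrow> 'a \<Rightarrow> real) \<Rightarrow> 'x \<Rightarrow> (nat \<Rightarrow> 'a) \<Rightarrow> real" where
  "joint_prob m pol x a = (\<Prod>j<m. pol j x (a j))"

definition Vval :: "nat \<Rightarrow> (nat \<Rightarrow> 'a set) \<Rightarrow> (nat \<Rightarrow> 'x \<Rightarrow> (nat \<Rightarrow> 'a) \<Rightarrow> real)
    \<Rightarrow> (nat \<Rightarrow> 'x \<Rightarrow> 'a \<Rightarrow> real) \<Rightarrow> real \<Rightarrow> (nat \<Rightarrow> 'x \<Rightarrow> 'a \<Rightarrow> real) \<Rightarrow> nat \<Rightarrow> 'x \<Rightarrow> ereal" where
  "Vval m A rw ref \<eta> pol i x =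
     ereal (\<Sum>a\<in>PiE {..<m} A. joint_prob m pol x a * rw i x a)
     - ereal (1 / \<eta>) * KL (A i) (pol i x) (ref i x)"

definition Vdagger :: "nat \<Rightarrow> (nat \<Rightarrow> 'a set) \<Rightarrow> (nat \<Rightarrow> 'x \<Rightarrow> (nat \<Rightarrow> 'a) \<Rightarrow> real)
    \<Rightarrow> (nat \<Rightarrow> 'x \<Rightarrow> 'a \<Rightarrow> real) \<Rightarrow> real \<Rightarrow> (nat \<Rightarrow> 'x \<Rightarrow> 'a \<Rightarrow> real) \<Rightarrow> nat \<Rightarrow> 'x \<Rightarrow> ereal" where
  "Vdagger m A rw ref \<eta> pol i x =
     (SUP p\<in>{p. is_dist (A i) p}. Vval m A rw ref \<eta> (pol(i := (\<lambda>y. p))) i x)"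

text \<open>Expectation over a_{-i} ~ pol_{-i}(.|x) of g(a_i, a_{-i}); the joint action is b(i := ai).\<close>
definition E_minus :: "nat \<Rightarrow> (nat \<Rightarrow> 'a set) \<Rightarrow> (nat \<Rightarrow> 'x \<Rightarrow> 'a \<Rightarrow> real) \<Rightarrow> nat \<Rightarrow> 'x
    \<Rightarrow> ((nat \<Rightarrow> 'a) \<Rightarrow> real) \<Rightarrow> real" where
  "E_minus m A pol i x g =
     (\<Sum>b\<in>PiE ({..<m} - {i}) A. (\<Prod>j\<in>{..<m} - {i}. pol j x (b j)) * g b)"

end

(*
  With the opponents frozen at pihat_{-i}, player i faces a one-player problem: maximize
  <p, u> - KL(p || ref) / eta over distributions p on A_i, where u(a_i) is the expected reward
  of a_i against pihat_{-i}. By the Gibbs variational principle its value is ln Z_u / eta, and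
  a distribution p falls short of it by exactly KL(p || g_u) / eta, where g_u is the Gibbs
  distribution proportional to ref * exp (eta u). The Nash condition therefore forces
  pihat_i = g_Q for the empirical utility, and the regret under the true utility is
  KL(g_Q || g_r) / eta. That divergence is a centred log-moment generating function of
  eta (r - Q) under g_Q, which a second-order Taylor expansion bounds by eta^2/2 max (Q - r)^2;
  finally Jensen bounds (Q - r)^2 at each a_i by the expected squared error.
*)
theory Submission
  imports Defs
begin

definition KL_sum :: "'a set \<Rightarrow> ('a \<Rightarrow> real) \<Rightarrow> ('a \<Rightarrow> real) \<Rightarrow> real" where
  "KL_sum S p q = (\<Sum>a\<in>S. if p a = 0 then 0 else p a * ln (p a / q a))"

lemma KL_eq_KL_sum:
  assumes "\<forall>a\<in>S. 0 < p a \<longrightarrow> 0 < q a"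
  shows "KL S p q = ereal (KL_sum S p q)"
  using assms by (auto simp: KL_def KL_sum_def)

lemma KL_eq_infinity:
  assumes "\<exists>a\<in>S. 0 < p a \<and> q a = 0"
  shows "KL S p q = \<infinity>"
  using assms by (simp add: KL_def)

lemma KL_sum_self: "KL_sum S p p = 0"
  unfolding KL_sum_def by (intro sum.neutral) auto

lemma KL_sum_cong:
  assumes "\<forall>a\<in>S. p a = p' a"
  shows "KL_sum S p q = KL_sum S p' q"
  using assms unfolding KL_sum_def by (intro sum.cong) auto

lemma is_dist_pos_ex:
  assumes "is_dist S p"
  shows "\<exists>a\<in>S. 0 < p a"
proof (rule ccontr)
  assume "\<not> ?thesis"
  then have "sum p S \<le> 0" by (intro sum_nonpos) (auto simp: not_less)
  with assms show False by (simp add: is_dist_def)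
qed

lemma KL_term_nonneg:
  fixes s t :: real
  assumes "0 \<le> s" "0 \<le> t" "0 < s \<Longrightarrow> 0 < t"
  shows "0 \<le> t - s + (if s = 0 then 0 else s * ln (s / t))"
    and "t - s + (if s = 0 then 0 else s * ln (s / t)) = 0 \<Longrightarrow> s = t"
proof -
  have key: "s - t \<le> s * ln (s / t) \<and> (s * ln (s / t) = s - t \<longrightarrow> s = t)" if "0 < s" "0 < t"
  proof -
    have "s * ln (s / t) = s * (- ln (t / s))"
      using that by (simp add: ln_div)
    moreover have "s * (- ln (t / s)) \<ge> s * (1 - t / s)"
      using that ln_le_minus_one[of "t / s"] by (intro mult_left_mono) auto
    moreover have "s * (1 - t / s) = s - t"
      using that by (simp add: field_simps)
    moreover have "t / s = 1" if "s * (- ln (t / s)) = s * (1 - t / s)"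
    proof -
      have "ln (t / s) = t / s - 1"
        using that \<open>0 < s\<close> by (subst (asm) mult_left_cancel) auto
      then show ?thesis
        using \<open>0 < s\<close> \<open>0 < t\<close> ln_eq_minus_one[of "t / s"] by simp
    qed
    ultimately show ?thesis
      using that by auto
  qed
  show "0 \<le> t - s + (if s = 0 then 0 else s * ln (s / t))"
    using assms key by (cases "s = 0") auto
  show "s = t" if "t - s + (if s = 0 then 0 else s * ln (s / t)) = 0"
    using assms key that by (cases "s = 0") auto
qed

lemma KL_sum_eq_sum_KL_term:
  assumes "is_dist S p" "is_dist S q"
  shows "KL_sum S p q = (\<Sum>a\<in>S. q a - p a + (if p a = 0 then 0 else p a * ln (p a / q a)))"
  using assms by (simp add: KL_sum_def sum.distrib sum_subtractf is_dist_def)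

lemma KL_sum_nonneg:
  assumes "is_dist S p" "is_dist S q" "\<forall>a\<in>S. 0 < p a \<longrightarrow> 0 < q a"
  shows "0 \<le> KL_sum S p q"
  unfolding KL_sum_eq_sum_KL_term[OF assms(1,2)]
  using assms by (intro sum_nonneg KL_term_nonneg(1)) (auto simp: is_dist_def)

lemma KL_sum_le_0_imp_eq:
  assumes "finite S" "is_dist S p" "is_dist S q" "\<forall>a\<in>S. 0 < p a \<longrightarrow> 0 < q a"
    and "KL_sum S p q \<le> 0"
  shows "\<forall>a\<in>S. p a = q a"
proof
  fix a assume a: "a \<in> S"
  define D where "D b = q b - p b + (if p b = 0 then 0 else p b * ln (p b / q b))" for b
  have nonneg: "0 \<le> p b" "0 \<le> q b" "0 < p b \<Longrightarrow> 0 < q b" if "b \<in> S" for b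
    using assms(2-4) that by (auto simp: is_dist_def)
  have D_nonneg: "0 \<le> D b" if "b \<in> S" for b
    unfolding D_def by (rule KL_term_nonneg(1)[OF nonneg[OF that]])
  have "sum D S = 0"
    using assms(5) KL_sum_nonneg[OF assms(2-4)]
    unfolding D_def KL_sum_eq_sum_KL_term[OF assms(2,3)] by linarith
  then have "D a = 0"
    using assms(1) D_nonneg a by (simp add: sum_nonneg_eq_0_iff)
  then show "p a = q a"
    using KL_term_nonneg(2)[OF nonneg[OF a]] unfolding D_def by blast
qed

definition partition_function :: "'a set \<Rightarrow> ('a \<Rightarrow> real) \<Rightarrow> ('a \<Rightarrow> real) \<Rightarrow> real" where
  "partition_function S w f = (\<Sum>a\<in>S. w a * exp (f a))"

definition gibbs_dist :: "'a set \<Rightarrow> ('a \<Rightarrow> real) \<Rightarrow> ('a \<Rightarrow> real) \<Rightarrow> 'a \<Rightarrow> real" where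
  "gibbs_dist S w f a = w a * exp (f a) / partition_function S w f"

lemma partition_function_pos:
  assumes "finite S" "is_dist S w"
  shows "0 < partition_function S w f"
proof -
  obtain a where a: "a \<in> S" "0 < w a"
    using is_dist_pos_ex[OF assms(2)] by blast
  then show ?thesis
    unfolding partition_function_def
    using assms by (intro sum_pos2[OF assms(1) a(1)]) (auto simp: is_dist_def)
qed

lemma is_dist_gibbs_dist:
  assumes "finite S" "is_dist S w"
  shows "is_dist S (gibbs_dist S w f)"
  using assms partition_function_pos[OF assms, of f]
  by (auto simp: is_dist_def gibbs_dist_def partition_function_def
      simp flip: sum_divide_distrib)

lemma gibbs_dist_pos_iff:
  assumes "finite S" "is_dist S w"
  shows "0 < gibbs_dist S w f a \<longleftrightarrow> 0 < w a"
  using partition_function_pos[OF assms, of f]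
  by (simp add: gibbs_dist_def zero_less_divide_iff zero_less_mult_iff)

lemma gibbs_variational_identity:
  assumes "finite S" "is_dist S w" "is_dist S p" "\<forall>a\<in>S. 0 < p a \<longrightarrow> 0 < w a"
  shows "(\<Sum>a\<in>S. p a * f a) - KL_sum S p w
       = ln (partition_function S w f) - KL_sum S p (gibbs_dist S w f)"
proof -
  define Z where "Z = partition_function S w f"
  have "Z > 0"
    unfolding Z_def by (rule partition_function_pos[OF assms(1,2)])
  have log_ratio: "(if p a = 0 then 0 else p a * ln (p a / gibbs_dist S w f a))
      = (if p a = 0 then 0 else p a * ln (p a / w a)) - p a * f a + p a * ln Z"
    if "a \<in> S" for a
  proof (cases "p a = 0")
    case False
    then have "0 < p a" "0 < w a"
      using assms(3,4) that by (auto simp: is_dist_def less_le)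
    then have "ln (p a / gibbs_dist S w f a) = ln (p a / w a) - f a + ln Z"
      using \<open>Z > 0\<close> by (simp add: gibbs_dist_def Z_def[symmetric] ln_div ln_mult)
    then have "p a * ln (p a / gibbs_dist S w f a) = p a * (ln (p a / w a) - f a + ln Z)"
      by (rule arg_cong)
    then show ?thesis
      using False by (simp add: algebra_simps)
  qed simp
  have "KL_sum S p (gibbs_dist S w f) = KL_sum S p w - (\<Sum>a\<in>S. p a * f a) + ln Z"
    using assms(3) unfolding KL_sum_def
    by (simp add: sum.cong[OF refl log_ratio] sum.distrib sum_subtractf is_dist_def
        flip: sum_distrib_right)
  then show ?thesis
    by (simp add: Z_def)
qed

lemma ln_expectation_exp_le:
  fixes y :: "'a \<Rightarrow> real"
  assumes "finite S" "is_dist S g" "\<forall>a\<in>S. (y a)\<^sup>2 \<le> C"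
  shows "ln (\<Sum>a\<in>S. g a * exp (y a)) \<le> (\<Sum>a\<in>S. g a * y a) + C / 2"
proof -
  define M0 where "M0 t = partition_function S g (\<lambda>a. t * y a)" for t
  define M1 where "M1 t = (\<Sum>a\<in>S. g a * y a * exp (t * y a))" for t
  define M2 where "M2 t = (\<Sum>a\<in>S. g a * (y a)\<^sup>2 * exp (t * y a))" for t
  define var where "var t = M2 t / M0 t - (M1 t / M0 t)\<^sup>2" for t
  have M0_pos: "0 < M0 t" for t
    unfolding M0_def by (rule partition_function_pos[OF assms(1,2)])
  have dM0: "(M0 has_real_derivative M1 t) (at t)" for t
    unfolding M0_def M1_def partition_function_def
    by (auto intro!: derivative_eq_intros sum.cong simp: algebra_simps)
  have dM1: "(M1 has_real_derivative M2 t) (at t)" for t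
    unfolding M1_def M2_def
    by (auto intro!: derivative_eq_intros sum.cong simp: algebra_simps power2_eq_square)
  define D where "D = [\<lambda>t. ln (M0 t), \<lambda>t. M1 t / M0 t, var]"
  have "(D ! k has_real_derivative (D ! Suc k) t) (at t)" if "k < 2" for k t
  proof -
    have "((\<lambda>t. ln (M0 t)) has_real_derivative M1 t / M0 t) (at t)"
      using M0_pos[of t] by (auto intro!: derivative_eq_intros dM0 simp: field_simps)
    moreover have "((\<lambda>t. M1 t / M0 t) has_real_derivative var t) (at t)"
      using M0_pos[of t] unfolding var_def
      by (auto intro!: derivative_eq_intros dM0 dM1 simp: field_simps power2_eq_square)
    ultimately show ?thesis
      using that by (auto simp: D_def less_2_cases_iff)
  qed
  then obtain t where t: "ln (M0 1) = ln (M0 0) + M1 0 / M0 0 + var t / 2"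
    using Taylor[of 2 "(!) D" "\<lambda>t. ln (M0 t)" 0 1 0 1]
    by (auto simp: D_def lessThan_nat_numeral)
  \<comment> \<open>the second derivative of the cumulant generating function is the variance of y
      under the tilted weights, hence at most C\<close>
  have "M2 t \<le> C * M0 t"
    unfolding M2_def M0_def partition_function_def sum_distrib_left
  proof (rule sum_mono)
    fix a assume "a \<in> S"
    then have "(y a)\<^sup>2 * (g a * exp (t * y a)) \<le> C * (g a * exp (t * y a))"
      using assms(2,3) by (intro mult_right_mono) (auto simp: is_dist_def)
    then show "g a * (y a)\<^sup>2 * exp (t * y a) \<le> C * (g a * exp (t * y a))"
      by (simp add: ac_simps)
  qed
  then have "var t \<le> C"
    using M0_pos[of t] unfolding var_def
    by (smt (verit) pos_divide_le_eq zero_le_power2 mult.commute)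
  moreover have "M0 0 = 1" "M1 0 = (\<Sum>a\<in>S. g a * y a)"
    using assms(2) by (simp_all add: M0_def M1_def partition_function_def is_dist_def)
  ultimately show ?thesis
    using t by (simp add: M0_def partition_function_def)
qed

lemma KL_sum_gibbs_dist_le:
  assumes "finite S" "is_dist S w" "\<forall>a\<in>S. (f a - h a)\<^sup>2 \<le> C"
  shows "KL_sum S (gibbs_dist S w f) (gibbs_dist S w h) \<le> C / 2"
proof -
  define g where "g = gibbs_dist S w f"
  define Zf where "Zf = partition_function S w f"
  define Zh where "Zh = partition_function S w h"
  have g: "is_dist S g" "\<forall>a\<in>S. 0 < g a \<longrightarrow> 0 < w a"
    unfolding g_def using is_dist_gibbs_dist[OF assms(1,2)] gibbs_dist_pos_iff[OF assms(1,2)]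
    by simp_all
  have "Zf > 0" "Zh > 0"
    unfolding Zf_def Zh_def using partition_function_pos[OF assms(1,2)] by auto
  have "(\<Sum>a\<in>S. g a * f a) - KL_sum S g w = ln Zf"
    using gibbs_variational_identity[OF assms(1,2) g, of f] by (simp add: g_def Zf_def KL_sum_self)
  moreover have "(\<Sum>a\<in>S. g a * h a) - KL_sum S g w = ln Zh - KL_sum S g (gibbs_dist S w h)"
    using gibbs_variational_identity[OF assms(1,2) g, of h] by (simp add: Zh_def)
  ultimately have KL_eq: "KL_sum S g (gibbs_dist S w h) = ln Zh - ln Zf - (\<Sum>a\<in>S. g a * (h a - f a))"
    by (simp add: sum_subtractf right_diff_distrib)
  have "Zh / Zf = (\<Sum>a\<in>S. g a * exp (h a - f a))"
    unfolding Zh_def partition_function_def sum_divide_distrib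
    by (intro sum.cong) (simp_all add: g_def gibbs_dist_def Zf_def[symmetric] exp_diff)
  moreover have "ln Zh - ln Zf = ln (Zh / Zf)"
    using \<open>Zf > 0\<close> \<open>Zh > 0\<close> by (simp add: ln_div)
  ultimately have "ln Zh - ln Zf \<le> (\<Sum>a\<in>S. g a * (h a - f a)) + C / 2"
    using ln_expectation_exp_le[OF assms(1) g(1), of "\<lambda>a. h a - f a" C] assms(3)
    by (simp add: power2_commute)
  with KL_eq show ?thesis
    by (simp add: g_def)
qed

definition reg_value :: "'a set \<Rightarrow> ('a \<Rightarrow> real) \<Rightarrow> real \<Rightarrow> ('a \<Rightarrow> real) \<Rightarrow> ('a \<Rightarrow> real) \<Rightarrow> ereal" where
  "reg_value S w \<eta> u p = ereal (\<Sum>a\<in>S. p a * u a) - ereal (1 / \<eta>) * KL S p w"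

lemma abs_cont_iff:
  assumes "is_dist S w"
  shows "(\<forall>a\<in>S. 0 < p a \<longrightarrow> 0 < w a) \<longleftrightarrow> \<not> (\<exists>a\<in>S. 0 < p a \<and> w a = 0)"
  using assms by (auto simp: is_dist_def less_le)

lemma reg_value_eq_minus_infinity:
  assumes "\<eta> > 0" "\<exists>a\<in>S. 0 < p a \<and> w a = 0"
  shows "reg_value S w \<eta> u p = -\<infinity>"
  using assms by (simp add: reg_value_def KL_eq_infinity)

lemma reg_value_eq_gibbs:
  assumes "\<eta> > 0" "finite S" "is_dist S w" "is_dist S p" "\<forall>a\<in>S. 0 < p a \<longrightarrow> 0 < w a"
  shows "reg_value S w \<eta> u p = ereal ((ln (partition_function S w (\<lambda>a. \<eta> * u a))
      - KL_sum S p (gibbs_dist S w (\<lambda>a. \<eta> * u a))) / \<eta>)"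
proof -
  have "(\<Sum>a\<in>S. p a * (\<eta> * u a)) = \<eta> * (\<Sum>a\<in>S. p a * u a)"
    by (simp add: sum_distrib_left ac_simps)
  then have "\<eta> * (\<Sum>a\<in>S. p a * u a) - KL_sum S p w = ln (partition_function S w (\<lambda>a. \<eta> * u a))
      - KL_sum S p (gibbs_dist S w (\<lambda>a. \<eta> * u a))"
    using gibbs_variational_identity[OF assms(2-5), of "\<lambda>a. \<eta> * u a"] by simp
  then show ?thesis
    using assms(1) by (simp add: reg_value_def KL_eq_KL_sum[OF assms(5)] field_simps)
qed

lemma reg_value_le_ln_partition_function:
  assumes "\<eta> > 0" "finite S" "is_dist S w" "is_dist S p"
  shows "reg_value S w \<eta> u p \<le> ereal (ln (partition_function S w (\<lambda>a. \<eta> * u a)) / \<eta>)"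
proof (cases "\<exists>a\<in>S. 0 < p a \<and> w a = 0")
  case True
  then show ?thesis
    using assms(1) by (simp add: reg_value_eq_minus_infinity)
next
  case False
  then have abs_cont: "\<forall>a\<in>S. 0 < p a \<longrightarrow> 0 < w a"
    using abs_cont_iff[OF assms(3)] by blast
  have "0 \<le> KL_sum S p (gibbs_dist S w (\<lambda>a. \<eta> * u a))"
    using abs_cont assms(2-4)
    by (intro KL_sum_nonneg is_dist_gibbs_dist) (auto simp: gibbs_dist_pos_iff)
  then show ?thesis
    using assms(1) by (simp add: reg_value_eq_gibbs[OF assms abs_cont] divide_right_mono)
qed

lemma reg_value_maximizer_eq_gibbs_dist:
  assumes "\<eta> > 0" "finite S" "is_dist S w" "is_dist S \<pi>"
    and max: "\<forall>p. is_dist S p \<longrightarrow> reg_value S w \<eta> u p \<le> reg_value S w \<eta> u \<pi>"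
  shows "\<forall>a\<in>S. \<pi> a = gibbs_dist S w (\<lambda>a. \<eta> * u a) a"
proof -
  define g where "g = gibbs_dist S w (\<lambda>a. \<eta> * u a)"
  define Z where "Z = partition_function S w (\<lambda>a. \<eta> * u a)"
  have g: "is_dist S g" "\<forall>a\<in>S. 0 < g a \<longrightarrow> 0 < w a"
    unfolding g_def using is_dist_gibbs_dist[OF assms(2,3)] gibbs_dist_pos_iff[OF assms(2,3)]
    by simp_all
  \<comment> \<open>comparing with the reference policy, whose value is finite, rules out a value of -\<infinity>\<close>
  have abs_cont: "\<forall>a\<in>S. 0 < \<pi> a \<longrightarrow> 0 < w a"
  proof (rule ccontr)
    assume "\<not> ?thesis"
    then have "\<exists>a\<in>S. 0 < \<pi> a \<and> w a = 0"
      using abs_cont_iff[OF assms(3), of \<pi>] by blast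
    then have "reg_value S w \<eta> u \<pi> = -\<infinity>"
      by (rule reg_value_eq_minus_infinity[OF assms(1)])
    moreover have "reg_value S w \<eta> u w \<noteq> -\<infinity>"
      using reg_value_eq_gibbs[OF assms(1-3,3)] by simp
    moreover have "reg_value S w \<eta> u w \<le> reg_value S w \<eta> u \<pi>"
      using max assms(3) by blast
    ultimately show False
      by simp
  qed
  have "ereal (ln Z / \<eta>) = reg_value S w \<eta> u g"
    using reg_value_eq_gibbs[OF assms(1-3) g] by (simp add: g_def Z_def KL_sum_self)
  also have "\<dots> \<le> ereal ((ln Z - KL_sum S \<pi> g) / \<eta>)"
    using max g(1) reg_value_eq_gibbs[OF assms(1-4) abs_cont] by (simp add: g_def Z_def)
  finally have "KL_sum S \<pi> g \<le> 0"
    using assms(1) by (simp add: divide_right_mono_neg field_simps)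
  moreover have "\<forall>a\<in>S. 0 < \<pi> a \<longrightarrow> 0 < g a"
    using abs_cont assms(2,3) by (simp add: g_def gibbs_dist_pos_iff)
  ultimately show ?thesis
    using KL_sum_le_0_imp_eq[OF assms(2,4) g(1)] by (simp add: g_def)
qed

lemma reg_value_regret_le:
  assumes "\<eta> > 0" "finite S" "is_dist S w" "is_dist S \<pi>"
    and max: "\<forall>p. is_dist S p \<longrightarrow> reg_value S w \<eta> u p \<le> reg_value S w \<eta> u \<pi>"
    and close: "\<forall>a\<in>S. (u a - v a)\<^sup>2 \<le> C"
  shows "(SUP p\<in>{p. is_dist S p}. reg_value S w \<eta> v p) - reg_value S w \<eta> v \<pi> \<le> ereal (\<eta> / 2 * C)"
proof -
  define gu where "gu = gibbs_dist S w (\<lambda>a. \<eta> * u a)"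
  define gv where "gv = gibbs_dist S w (\<lambda>a. \<eta> * v a)"
  define Zv where "Zv = partition_function S w (\<lambda>a. \<eta> * v a)"
  have \<pi>_eq: "\<forall>a\<in>S. \<pi> a = gu a"
    unfolding gu_def by (rule reg_value_maximizer_eq_gibbs_dist[OF assms(1-4) max])
  then have abs_cont: "\<forall>a\<in>S. 0 < \<pi> a \<longrightarrow> 0 < w a"
    using assms(2,3) by (simp add: gu_def gibbs_dist_pos_iff)
  have sup: "(SUP p\<in>{p. is_dist S p}. reg_value S w \<eta> v p) \<le> ereal (ln Zv / \<eta>)"
    unfolding Zv_def using assms(1-3) by (auto intro!: SUP_least reg_value_le_ln_partition_function)
  have val: "reg_value S w \<eta> v \<pi> = ereal ((ln Zv - KL_sum S gu gv) / \<eta>)"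
    using reg_value_eq_gibbs[OF assms(1-4) abs_cont] KL_sum_cong[OF \<pi>_eq]
    by (simp add: Zv_def gv_def)
  have "\<forall>a\<in>S. (\<eta> * u a - \<eta> * v a)\<^sup>2 \<le> \<eta>\<^sup>2 * C"
    using close by (simp add: power_mult_distrib mult_left_mono flip: right_diff_distrib)
  then have "KL_sum S gu gv \<le> \<eta>\<^sup>2 * C / 2"
    unfolding gu_def gv_def by (rule KL_sum_gibbs_dist_le[OF assms(2,3)])
  then have KL_bound: "KL_sum S gu gv / \<eta> \<le> \<eta> / 2 * C"
    using assms(1) by (simp add: divide_le_eq power2_eq_square ac_simps)
  have "(SUP p\<in>{p. is_dist S p}. reg_value S w \<eta> v p) - reg_value S w \<eta> v \<pi>
      \<le> ereal (ln Zv / \<eta>) - ereal ((ln Zv - KL_sum S gu gv) / \<eta>)"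
    unfolding val by (rule ereal_minus_mono[OF sup order.refl])
  also have "\<dots> = ereal (KL_sum S gu gv / \<eta>)"
    by (simp add: diff_divide_distrib)
  also have "\<dots> \<le> ereal (\<eta> / 2 * C)"
    using KL_bound by simp
  finally show ?thesis .
qed

lemma square_weighted_mean_le:
  fixes W f :: "'b \<Rightarrow> real"
  assumes "\<forall>b\<in>T. 0 \<le> W b" "sum W T = 1"
  shows "(\<Sum>b\<in>T. W b * f b)\<^sup>2 \<le> (\<Sum>b\<in>T. W b * (f b)\<^sup>2)"
proof -
  define \<mu> where "\<mu> = (\<Sum>b\<in>T. W b * f b)"
  have "0 \<le> (\<Sum>b\<in>T. W b * (f b - \<mu>)\<^sup>2)"
    using assms(1) by (intro sum_nonneg) auto
  also have "\<dots> = (\<Sum>b\<in>T. W b * (f b)\<^sup>2) - 2 * \<mu> * (\<Sum>b\<in>T. W b * f b) + \<mu>\<^sup>2 * sum W T"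
    by (simp add: power2_eq_square algebra_simps sum.distrib sum_subtractf sum_distrib_left
        sum_distrib_right)
  finally show ?thesis
    using assms(2) by (simp add: \<mu>_def power2_eq_square)
qed

lemma E_minus_fun_upd_self: "E_minus m A (pol(i := q)) i x g = E_minus m A pol i x g"
  unfolding E_minus_def by (intro sum.cong prod.cong refl arg_cong2[where f = "(*)"]) auto

lemma E_minus_diff:
  "E_minus m A pol i x g - E_minus m A pol i x h = E_minus m A pol i x (\<lambda>b. g b - h b)"
  by (simp add: E_minus_def sum_subtractf right_diff_distrib)

lemma E_minus_square_le:
  assumes "\<And>j. j < m \<Longrightarrow> finite (A j)" "\<And>j. j < m \<Longrightarrow> is_dist (A j) (pol j x)"
  shows "(E_minus m A pol i x g)\<^sup>2 \<le> E_minus m A pol i x (\<lambda>b. (g b)\<^sup>2)"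
proof -
  have "(\<Sum>b\<in>PiE ({..<m} - {i}) A. \<Prod>j\<in>{..<m} - {i}. pol j x (b j))
      = (\<Prod>j\<in>{..<m} - {i}. \<Sum>a\<in>A j. pol j x a)"
    using assms(1) by (intro prod_sum_PiE[symmetric]) auto
  also have "\<dots> = 1"
    using assms(2) by (intro prod.neutral) (auto simp: is_dist_def)
  finally show ?thesis
    unfolding E_minus_def using assms(2)
    by (intro square_weighted_mean_le ballI prod_nonneg) (auto simp: is_dist_def PiE_def Pi_def)
qed

lemma sum_joint_prob_eq_sum_E_minus:
  assumes "i < m" "\<And>j. j < m \<Longrightarrow> finite (A j)"
  shows "(\<Sum>a\<in>PiE {..<m} A. joint_prob m pol x a * f a)
       = (\<Sum>ai\<in>A i. pol i x ai * E_minus m A pol i x (\<lambda>b. f (b(i := ai))))"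
proof -
  define J where "J = {..<m} - {i}"
  have I: "{..<m} = insert i J" "i \<notin> J" "finite J"
    using assms(1) by (auto simp: J_def)
  have joint_prob_upd: "joint_prob m pol x (b(i := ai)) = pol i x ai * (\<Prod>j\<in>J. pol j x (b j))"
    for b ai
  proof -
    have "(\<Prod>j\<in>J. pol j x ((b(i := ai)) j)) = (\<Prod>j\<in>J. pol j x (b j))"
      using I(2) by (intro prod.cong) auto
    then show ?thesis
      unfolding joint_prob_def I(1) using I(2,3) by simp
  qed
  have "(\<Sum>a\<in>PiE {..<m} A. joint_prob m pol x a * f a)
      = (\<Sum>(ai, b)\<in>A i \<times> PiE J A. joint_prob m pol x (b(i := ai)) * f (b(i := ai)))"
    unfolding I(1) PiE_insert_eq
    by (subst sum.reindex[OF inj_combinator[OF I(2)]]) (simp add: case_prod_unfold)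
  also have "\<dots> = (\<Sum>ai\<in>A i. \<Sum>b\<in>PiE J A. joint_prob m pol x (b(i := ai)) * f (b(i := ai)))"
    by (rule sum.cartesian_product[symmetric])
  also have "\<dots> = (\<Sum>ai\<in>A i. pol i x ai * E_minus m A pol i x (\<lambda>b. f (b(i := ai))))"
    unfolding E_minus_def J_def[symmetric] joint_prob_upd
    by (simp add: sum_distrib_left mult.assoc)
  finally show ?thesis .
qed

lemma Vval_eq_reg_value:
  assumes "i < m" "\<And>j. j < m \<Longrightarrow> finite (A j)"
  shows "Vval m A rw ref \<eta> pol i x
    = reg_value (A i) (ref i x) \<eta> (\<lambda>ai. E_minus m A pol i x (\<lambda>b. rw i x (b(i := ai)))) (pol i x)"
  using sum_joint_prob_eq_sum_E_minus[OF assms, where pol = pol and x = x and f = "rw i x"]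
  by (simp add: Vval_def reg_value_def)

theorem mainTheorem6:
  fixes m :: nat and A :: "nat \<Rightarrow> 'a set"
    and rstar Qhat :: "nat \<Rightarrow> 'x \<Rightarrow> (nat \<Rightarrow> 'a) \<Rightarrow> real"
    and ref pihat :: "nat \<Rightarrow> 'x \<Rightarrow> 'a \<Rightarrow> real" and \<eta> :: real
  assumes fin: "\<And>j. j < m \<Longrightarrow> finite (A j) \<and> A j \<noteq> {}"
    and eta: "\<eta> > 0"
    and r_range: "\<And>j x a. j < m \<Longrightarrow> a \<in> PiE {..<m} A \<Longrightarrow> 0 \<le> rstar j x a \<and> rstar j x a \<le> 1"
    and Q_range: "\<And>j x a. j < m \<Longrightarrow> a \<in> PiE {..<m} A \<Longrightarrow> 0 \<le> Qhat j x a \<and> Qhat j x a \<le> 1"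
    and ref_dist: "\<And>j x. j < m \<Longrightarrow> is_dist (A j) (ref j x)"
    and pihat_dist: "\<And>j x. j < m \<Longrightarrow> is_dist (A j) (pihat j x)"
    and nash: "\<And>j x p. j < m \<Longrightarrow> is_dist (A j) p \<Longrightarrow>
        Vval m A Qhat ref \<eta> (pihat(j := (\<lambda>y. p))) j x \<le> Vval m A Qhat ref \<eta> pihat j x"
    and i: "i < m"
  shows "Vdagger m A rstar ref \<eta> pihat i x - Vval m A rstar ref \<eta> pihat i x
     \<le> ereal (\<eta> / 2 * Max ((\<lambda>ai. E_minus m A pihat i x
            (\<lambda>b. (Qhat i x (b(i := ai)) - rstar i x (b(i := ai)))\<^sup>2)) ` A i))"
proof -
  define u where "u rw ai = E_minus m A pihat i x (\<lambda>b. rw i x (b(i := ai)))" for rw ai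
  define M where "M = Max ((\<lambda>ai. E_minus m A pihat i x
      (\<lambda>b. (Qhat i x (b(i := ai)) - rstar i x (b(i := ai)))\<^sup>2)) ` A i)"
  have finA: "\<And>j. j < m \<Longrightarrow> finite (A j)"
    using fin by blast
  have V_upd: "Vval m A rw ref \<eta> (pihat(i := (\<lambda>y. p))) i x = reg_value (A i) (ref i x) \<eta> (u rw) p"
    for rw p
    using Vval_eq_reg_value[OF i finA, where pol = "pihat(i := (\<lambda>y. p))" and rw = rw and x = x]
    unfolding u_def E_minus_fun_upd_self by simp
  have V: "Vval m A rw ref \<eta> pihat i x = reg_value (A i) (ref i x) \<eta> (u rw) (pihat i x)" for rw
    using Vval_eq_reg_value[OF i finA, where pol = pihat and rw = rw and x = x]
    unfolding u_def .
  have max: "\<forall>p. is_dist (A i) p \<longrightarrow>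
      reg_value (A i) (ref i x) \<eta> (u Qhat) p \<le> reg_value (A i) (ref i x) \<eta> (u Qhat) (pihat i x)"
    using nash[OF i, where x = x] unfolding V_upd V by blast
  have close: "\<forall>a\<in>A i. (u Qhat a - u rstar a)\<^sup>2 \<le> M"
  proof
    fix a assume a: "a \<in> A i"
    have "(u Qhat a - u rstar a)\<^sup>2
        \<le> E_minus m A pihat i x (\<lambda>b. (Qhat i x (b(i := a)) - rstar i x (b(i := a)))\<^sup>2)"
      unfolding u_def E_minus_diff by (rule E_minus_square_le[OF finA pihat_dist])
    also have "\<dots> \<le> M"
      unfolding M_def using fin[OF i] a by (intro Max_ge) auto
    finally show "(u Qhat a - u rstar a)\<^sup>2 \<le> M" .
  qed
  show ?thesis
    unfolding Vdagger_def V_upd V M_def[symmetric]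
    using reg_value_regret_le[OF eta _ ref_dist[OF i] pihat_dist[OF i] max close] fin[OF i]
    by blast
qed

end
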